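(* If $G$ is a $\gamma_{\rm tg}$-critical graph and $v$ is any vertex of $G$, then no neighbor of $v$ is an optimal first move of Dominator in the Dominator-start total domination game on $G|v$.
   Context: Total domination game on a graph without isolated vertices: Dominator and Staller alternately choose vertices, each chosen vertex must be adjacent to some vertex not yet totally dominated (vertices declared totally dominated count as totally dominated); the game ends when no legal move exists; Dominator minimizes, Staller maximizes the number of moves. For $S\subseteq V(G)$, $G|S$ is $G$ with the vertices of $S$ declared already totally dominated; $\gamma_{\rm tg}(G|S)$ and $\gamma'_{\rm tg}(G|S)$ are the optimal numbers of moves when Dominator, respectively Staller, moves first; $\gamma_{\rm tg}(G)=\gamma_{\rm tg}(G|\emptyset)$, $G|v=G|\{v\}$. A vertex $d$ is an optimal first move of Dominator on $G|v$ if it is a legal move and $\gamma_{\rm tg}(G|v)=1+\gamma'_{\rm tg}(G|(\{v\}\cup N(d)))$. $G$ is $\gamma_{\rm tg}$-critical if $\gamma_{\rm tg}(G|v)<\gamma_{\rm tg}(G)$ for every vertex $v$. *)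

theory Defs
  imports Main
begin

definition nbhd :: "'a set \<Rightarrow> ('a \<Rightarrow> 'a \<Rightarrow> bool) \<Rightarrow> 'a \<Rightarrow> 'a set" where
  "nbhd V E u = {w \<in> V. E u w}"

definition simple_graph :: "'a set \<Rightarrow> ('a \<Rightarrow> 'a \<Rightarrow> bool) \<Rightarrow> bool" where
  "simple_graph V E \<longleftrightarrow> finite V \<and> (\<forall>u w. E u w \<longrightarrow> u \<in> V \<and> w \<in> V)
     \<and> (\<forall>u w. E u w \<longrightarrow> E w u) \<and> (\<forall>u. \<not> E u u)"

definition no_isolated :: "'a set \<Rightarrow> ('a \<Rightarrow> 'a \<Rightarrow> bool) \<Rightarrow> bool" where
  "no_isolated V E \<longleftrightarrow> (\<forall>v\<in>V. \<exists>w. E v w)"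

text \<open>A vertex u is a legal move when S is the set of vertices already totally dominated:
  u is adjacent to some vertex not yet totally dominated.\<close>
definition legal_move :: "'a set \<Rightarrow> ('a \<Rightarrow> 'a \<Rightarrow> bool) \<Rightarrow> 'a set \<Rightarrow> 'a \<Rightarrow> bool" where
  "legal_move V E S u \<longleftrightarrow> u \<in> V \<and> \<not> nbhd V E u \<subseteq> S"

text \<open>tg_val V E dmv S: number of moves under optimal play in the total domination game
  on G|S, where dmv = True means Dominator (minimizer) is to move.\<close>
function tg_val :: "'a set \<Rightarrow> ('a \<Rightarrow> 'a \<Rightarrow> bool) \<Rightarrow> bool \<Rightarrow> 'a set \<Rightarrow> nat" where
  "tg_val V E dmv S =
     (if finite V \<and> (\<exists>u. legal_move V E S u) then
        (if dmv then Min else Max)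
          ((\<lambda>u. 1 + tg_val V E (\<not> dmv) (S \<union> nbhd V E u)) ` {u. legal_move V E S u})
      else 0)"
  by pat_completeness auto
termination
proof (relation "measure (\<lambda>(V, E, dmv, S). card (V - S))")
  show "wf (measure (\<lambda>(V, E, dmv, S). card (V - S)))" by simp
next
  fix V :: "'a set" and E dmv S x
  assume a: "finite V \<and> (\<exists>u. legal_move V E S u)" and x: "x \<in> {u. legal_move V E S u}"
  then obtain w where w: "w \<in> nbhd V E x" "w \<notin> S" by (auto simp: legal_move_def)
  have "V - (S \<union> nbhd V E x) \<subset> V - S" using w by (auto simp: nbhd_def)
  then have "card (V - (S \<union> nbhd V E x)) < card (V - S)"
    using a by (meson finite_Diff psubset_card_mono)
  then show "((V, E, \<not> dmv, S \<union> nbhd V E x), V, E, dmv, S)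
         \<in> measure (\<lambda>(V, E, dmv, S). card (V - S))" by simp
qed

definition gamma_tg :: "'a set \<Rightarrow> ('a \<Rightarrow> 'a \<Rightarrow> bool) \<Rightarrow> 'a set \<Rightarrow> nat" where
  "gamma_tg V E S = tg_val V E True S"

definition gamma'_tg :: "'a set \<Rightarrow> ('a \<Rightarrow> 'a \<Rightarrow> bool) \<Rightarrow> 'a set \<Rightarrow> nat" where
  "gamma'_tg V E S = tg_val V E False S"

definition tg_critical :: "'a set \<Rightarrow> ('a \<Rightarrow> 'a \<Rightarrow> bool) \<Rightarrow> bool" where
  "tg_critical V E \<longleftrightarrow> (\<forall>v\<in>V. gamma_tg V E {v} < gamma_tg V E {})"

definition optimal_first_move :: "'a set \<Rightarrow> ('a \<Rightarrow> 'a \<Rightarrow> bool) \<Rightarrow> 'a \<Rightarrow> 'a \<Rightarrow> bool" where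
  "optimal_first_move V E v d \<longleftrightarrow> legal_move V E {v} d \<and>
     gamma_tg V E {v} = 1 + gamma'_tg V E ({v} \<union> nbhd V E d)"

end

theory Submission
  imports Defs
begin

text \<open>Playing a neighbour u of v as the first move in G totally dominates v anyway, so the game
  on G continues exactly as the game on G|v after the same move. If u were optimal on G|v, this
  would give \<open>\<gamma>\<^sub>t\<^sub>g(G) \<le> \<gamma>\<^sub>t\<^sub>g(G|v)\<close>, contradicting criticality.\<close>

lemma gamma_tg_le_legal_move:
  assumes "finite V" and "legal_move V E S d"
  shows "gamma_tg V E S \<le> 1 + gamma'_tg V E (S \<union> nbhd V E d)"
proof -
  have "finite {u. legal_move V E S u}"
    using assms(1) by (rule finite_subset[rotated]) (auto simp: legal_move_def)
  moreover have "gamma_tg V E S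
      = Min ((\<lambda>u. 1 + gamma'_tg V E (S \<union> nbhd V E u)) ` {u. legal_move V E S u})"
    unfolding gamma_tg_def gamma'_tg_def using assms by (subst tg_val.simps) auto
  ultimately show ?thesis
    using assms(2) by (simp add: Min_le)
qed

theorem lemma4p4:
  fixes V :: "'a set" and E :: "'a \<Rightarrow> 'a \<Rightarrow> bool" and v u :: 'a
  assumes "simple_graph V E" and "no_isolated V E" and "tg_critical V E"
    and "v \<in> V" and "E v u"
  shows "\<not> optimal_first_move V E v u"
proof
  assume opt: "optimal_first_move V E v u"
  have fin: "finite V" and "u \<in> V" and "E u v"
    using assms(1,5) by (auto simp: simple_graph_def)
  then have v_in_nbhd: "v \<in> nbhd V E u"
    using assms(4) by (simp add: nbhd_def)
  then have "legal_move V E {} u"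
    using \<open>u \<in> V\<close> by (auto simp: legal_move_def)
  then have "gamma_tg V E {} \<le> 1 + gamma'_tg V E ({} \<union> nbhd V E u)"
    by (rule gamma_tg_le_legal_move[OF fin])
  also have "\<dots> = 1 + gamma'_tg V E ({v} \<union> nbhd V E u)"
    using v_in_nbhd by (simp add: insert_absorb)
  also have "\<dots> = gamma_tg V E {v}"
    using opt by (simp add: optimal_first_move_def)
  finally have "gamma_tg V E {} \<le> gamma_tg V E {v}" .
  moreover have "gamma_tg V E {v} < gamma_tg V E {}"
    using assms(3,4) by (simp add: tg_critical_def)
  ultimately show False by simp
qed

end
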